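(* Consider one of Problems I, II or III. Let $f\in V'(\mathbb{R}^d)$ and let $u\in V(\mathbb{R}^d)$ be a local quasiminimizer of $J_f$ with parameters $(C,c,R)$. Then there is a constant $C'$ depending only on $C$, $c$, $R$ (and $d$) such that for all $a\in\mathbb{R}^d$, $r\in(0,R]$ and $\phi\in V(B_r(a))$, $$\left|\int_{\mathbb{R}^d}\tau(u,\phi)\,dx-\langle f,\phi\rangle\right|\le C' r^{d/2}\left(\int_{\mathbb{R}^d}\tau(\phi)\,dx\right)^{1/2}.$$
   Context: Let $d\geq 2$. Problem I: fix an integer $m\geq 1$; scalar functions; $V(\Omega)=H^m_0(\Omega,\mathbb{R})$, $\tau(u)=\sum_{i\in\{1,\ldots,d\}^m}|\partial_{i_1}\cdots\partial_{i_m}u|^2$. Problem II: $m=1$; $V(\Omega)=H^1_0(\Omega,\mathbb{R}^d)$, $\tau(u)=|\nabla u|^2+c_0(\nabla\cdot u)^2$ with fixed $c_0>0$. Problem III: $m=1$; $V(\Omega)=\{u\in H^1_0(\Omega,\mathbb{R}^d):\nabla\cdot u=0\}$, $\tau(u)=|\nabla u|^2$. $V(\mathbb{R}^d)$ is the corresponding space on $\mathbb{R}^d$ ($H^m(\mathbb{R}^d)$, $H^1(\mathbb{R}^d,\mathbb{R}^d)$, divergence-free $H^1(\mathbb{R}^d,\mathbb{R}^d)$), with dual $V'(\mathbb{R}^d)$ and pairing $\langle\cdot,\cdot\rangle$. $\tau(\cdot,\cdot)$ denotes the symmetric bilinear form with $\tau(u,u)=\tau(u)$. For $f\in V'(\mathbb{R}^d)$,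 $J_f(v)=\int\tau(v)\,dx-2\langle f,v\rangle$. Given $C,c,R>0$, $u\in V(\mathbb{R}^d)$ is a local quasiminimizer of $J_f$ with parameters $(C,c,R)$ if for every $a\in\mathbb{R}^d$, $r\in(0,R]$ and $v\in V(\mathbb{R}^d)$ with $v-u\in V(B_r(a))$ and $\int_{B_r(a)}\tau(v-u)\,dx\le c$ one has $J_f(v)\ge J_f(u)-Cr^d$. *)

theory Defs
  imports "HOL-Analysis.Analysis"
begin

primrec pd :: "'a::euclidean_space list \<Rightarrow> ('a \<Rightarrow> 'b::real_normed_vector) \<Rightarrow> 'a \<Rightarrow> 'b" where
  "pd [] f = f"
| "pd (i # is) f = (\<lambda>x. frechet_derivative (pd is f) (at x) i)"

definition smooth_fn :: "('a::euclidean_space \<Rightarrow> 'b::real_normed_vector) \<Rightarrow> bool" where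
  "smooth_fn f \<longleftrightarrow> (\<forall>is. set is \<subseteq> Basis \<longrightarrow> (\<forall>x. pd is f differentiable (at x)))"

definition test_fun :: "'a::euclidean_space set \<Rightarrow> ('a \<Rightarrow> 'b::real_normed_vector) \<Rightarrow> bool" where
  "test_fun \<Omega> \<psi> \<longleftrightarrow> smooth_fn \<psi> \<and> compact (closure {x. \<psi> x \<noteq> 0}) \<and> closure {x. \<psi> x \<noteq> 0} \<subseteq> \<Omega>"

definition L2 :: "('a::euclidean_space \<Rightarrow> 'b::euclidean_space) \<Rightarrow> bool" where
  "L2 u \<longleftrightarrow> u \<in> borel_measurable lborel \<and> integrable lborel (\<lambda>x. (norm (u x))^2)"

definition weak_deriv :: "'a::euclidean_space list \<Rightarrow> ('a \<Rightarrow> 'b::euclidean_space) \<Rightarrow> ('a \<Rightarrow> 'b) \<Rightarrow> bool" where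
  "weak_deriv is u g \<longleftrightarrow> (\<forall>\<psi>::'a \<Rightarrow> real. test_fun UNIV \<psi> \<longrightarrow>
      integral\<^sup>L lborel (\<lambda>x. pd is \<psi> x *\<^sub>R u x) = (-1) ^ length is *\<^sub>R integral\<^sup>L lborel (\<lambda>x. \<psi> x *\<^sub>R g x))"

definition wD :: "'a::euclidean_space list \<Rightarrow> ('a \<Rightarrow> 'b::euclidean_space) \<Rightarrow> 'a \<Rightarrow> 'b" where
  "wD is u = (SOME g. L2 g \<and> weak_deriv is u g)"

definition sobolev :: "nat \<Rightarrow> ('a::euclidean_space \<Rightarrow> 'b::euclidean_space) \<Rightarrow> bool" where
  "sobolev m u \<longleftrightarrow> L2 u \<and>
     (\<forall>is. set is \<subseteq> Basis \<and> length is \<le> m \<longrightarrow> (\<exists>g. L2 g \<and> weak_deriv is u g))"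

definition sob_norm :: "nat \<Rightarrow> ('a::euclidean_space \<Rightarrow> 'b::euclidean_space) \<Rightarrow> real" where
  "sob_norm m u = sqrt (\<Sum>is\<in>{is. set is \<subseteq> Basis \<and> length is \<le> m}.
                          integral\<^sup>L lborel (\<lambda>x. (norm (wD is u x))^2))"

text \<open>H^m_0(Omega): closure of C_c^infinity(Omega) in H^m, viewed (extension by zero) inside H^m(R^d).\<close>
definition H0 :: "nat \<Rightarrow> 'a::euclidean_space set \<Rightarrow> ('a \<Rightarrow> 'b::euclidean_space) set" where
  "H0 m \<Omega> = {u. sobolev m u \<and> (\<exists>\<psi>::nat \<Rightarrow> 'a \<Rightarrow> 'b. (\<forall>k. test_fun \<Omega> (\<psi> k)) \<and>
                     (\<lambda>k. sob_norm m (\<lambda>x. \<psi> k x - u x)) \<longlonglongrightarrow> 0)}"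

definition wdiv :: "('a::euclidean_space \<Rightarrow> 'a) \<Rightarrow> 'a \<Rightarrow> real" where
  "wdiv u x = (\<Sum>j\<in>Basis. wD [j] u x \<bullet> j)"

definition V_I :: "nat \<Rightarrow> ('a::euclidean_space \<Rightarrow> real) set" where
  "V_I m = {u. sobolev m u}"
definition VB_I :: "nat \<Rightarrow> 'a::euclidean_space \<Rightarrow> real \<Rightarrow> ('a \<Rightarrow> real) set" where
  "VB_I m a r = H0 m (ball a r)"
definition tau_I :: "nat \<Rightarrow> ('a::euclidean_space \<Rightarrow> real) \<Rightarrow> ('a \<Rightarrow> real) \<Rightarrow> 'a \<Rightarrow> real" where
  "tau_I m u v x = (\<Sum>is\<in>{is. set is \<subseteq> Basis \<and> length is = m}. wD is u x * wD is v x)"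

definition V_II :: "('a::euclidean_space \<Rightarrow> 'a) set" where
  "V_II = {u. sobolev 1 u}"
definition VB_II :: "'a::euclidean_space \<Rightarrow> real \<Rightarrow> ('a \<Rightarrow> 'a) set" where
  "VB_II a r = H0 1 (ball a r)"
definition tau_II :: "real \<Rightarrow> ('a::euclidean_space \<Rightarrow> 'a) \<Rightarrow> ('a \<Rightarrow> 'a) \<Rightarrow> 'a \<Rightarrow> real" where
  "tau_II c0 u v x = (\<Sum>j\<in>Basis. wD [j] u x \<bullet> wD [j] v x) + c0 * wdiv u x * wdiv v x"

definition V_III :: "('a::euclidean_space \<Rightarrow> 'a) set" where
  "V_III = {u. sobolev 1 u \<and> (AE x in lborel. wdiv u x = 0)}"
definition VB_III :: "'a::euclidean_space \<Rightarrow> real \<Rightarrow> ('a \<Rightarrow> 'a) set" where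
  "VB_III a r = {u \<in> H0 1 (ball a r). AE x in lborel. wdiv u x = 0}"
definition tau_III :: "('a::euclidean_space \<Rightarrow> 'a) \<Rightarrow> ('a \<Rightarrow> 'a) \<Rightarrow> 'a \<Rightarrow> real" where
  "tau_III u v x = (\<Sum>j\<in>Basis. wD [j] u x \<bullet> wD [j] v x)"

text \<open>Continuous linear functionals on V (w.r.t. the norm nrm); pairing <f,v> = f v.\<close>
definition dual_sp :: "('a \<Rightarrow> 'b::real_vector) set \<Rightarrow> (('a \<Rightarrow> 'b) \<Rightarrow> real) \<Rightarrow> (('a \<Rightarrow> 'b) \<Rightarrow> real) set" where
  "dual_sp V nrm = {f. (\<forall>u\<in>V. \<forall>v\<in>V. \<forall>s t. f (\<lambda>x. s *\<^sub>R u x + t *\<^sub>R v x) = s * f u + t * f v)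
                     \<and> (\<exists>K. \<forall>v\<in>V. \<bar>f v\<bar> \<le> K * nrm v)}"

definition J_f :: "(('a::euclidean_space \<Rightarrow> 'b) \<Rightarrow> ('a \<Rightarrow> 'b) \<Rightarrow> 'a \<Rightarrow> real) \<Rightarrow> (('a \<Rightarrow> 'b) \<Rightarrow> real) \<Rightarrow> ('a \<Rightarrow> 'b) \<Rightarrow> real" where
  "J_f tau f v = integral\<^sup>L lborel (\<lambda>x. tau v v x) - 2 * f v"

definition local_quasimin ::
  "('a::euclidean_space \<Rightarrow> 'b::real_normed_vector) set \<Rightarrow> ('a \<Rightarrow> real \<Rightarrow> ('a \<Rightarrow> 'b) set)
   \<Rightarrow> (('a \<Rightarrow> 'b) \<Rightarrow> ('a \<Rightarrow> 'b) \<Rightarrow> 'a \<Rightarrow> real) \<Rightarrow> (('a \<Rightarrow> 'b) \<Rightarrow> real)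
   \<Rightarrow> real \<Rightarrow> real \<Rightarrow> real \<Rightarrow> ('a \<Rightarrow> 'b) \<Rightarrow> bool" where
  "local_quasimin V VB tau f C c R u \<longleftrightarrow> u \<in> V \<and>
     (\<forall>a r v. 0 < r \<and> r \<le> R \<and> v \<in> V \<and> (\<lambda>x. v x - u x) \<in> VB a r \<and>
        (LINT x:ball a r|lborel. tau (\<lambda>x. v x - u x) (\<lambda>x. v x - u x) x) \<le> c
        \<longrightarrow> J_f tau f v \<ge> J_f tau f u - C * r ^ DIM('a))"

end

theory Submission
  imports Defs "HOL-Computational_Algebra.Polynomial"
begin

text \<open>Test the quasiminimality of \<open>u\<close> with \<open>v = u + t \<phi>\<close>. Because \<open>\<tau>\<close> is quadratic,
  \<open>J(v) - J(u) = 2 t (\<integral> \<tau>(u,\<phi>) - \<langle>f,\<phi>\<rangle>) + t\<^sup>2 \<integral> \<tau>(\<phi>)\<close>, and quasiminimality bounds this from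
  below by \<open>-C r\<^sup>d\<close> whenever \<open>t\<^sup>2 \<integral> \<tau>(\<phi>) \<le> c\<close>. Choosing \<open>|t| \<sim> r\<^sup>d\<^sup>/\<^sup>2 / (\<integral> \<tau>(\<phi>))\<^sup>1\<^sup>/\<^sup>2\<close> with the sign of
  the first variation gives the estimate.

  That \<open>\<tau>\<close> is quadratic relies on weak derivatives being unique almost everywhere, which is
  the fundamental lemma of the calculus of variations: an \<open>L\<^sup>2\<close> function orthogonal to all test
  functions vanishes a.e. It is proved by approximating indicators of boxes by smooth bump
  functions built from \<open>exp (-1/t)\<close>, and then passing from boxes to all Borel sets by uniqueness
  of measures.\<close>

section \<open>Smooth bump functions\<close>

lemma poly_inverse_times_exp_tendsto_0:
  "((\<lambda>t. poly p (1/t) * exp (-1/t)) \<longlongrightarrow> (0::real)) (at_right 0)"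
proof -
  have "((\<lambda>s. \<Sum>i\<le>degree p. coeff p i * (s ^ i / exp s)) \<longlongrightarrow> (\<Sum>i\<le>degree p. coeff p i * 0)) at_top"
    by (intro tendsto_intros tendsto_power_div_exp_0)
  moreover have "(\<Sum>i\<le>degree p. coeff p i * (s ^ i / exp s)) = poly p s * exp (- s)" for s :: real
    by (simp add: poly_altdef exp_minus sum_distrib_right divide_inverse mult.assoc)
  ultimately have "((\<lambda>s. poly p s * exp (- s)) \<longlongrightarrow> 0) at_top"
    by simp
  then show ?thesis
    unfolding filterlim_at_right_to_top by (simp add: divide_inverse)
qed

text \<open>On \<open>t > 0\<close> the \<open>n\<close>-th derivative of \<open>exp (-1/t)\<close> is \<open>flat_poly n (1/t) * exp (-1/t)\<close>.\<close>

fun flat_poly :: "nat \<Rightarrow> real poly" where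
  "flat_poly 0 = 1"
| "flat_poly (Suc n) = [:0, 0, 1:] * (flat_poly n - pderiv (flat_poly n))"

definition flat_deriv :: "nat \<Rightarrow> real \<Rightarrow> real" where
  "flat_deriv n t = (if t > 0 then poly (flat_poly n) (1/t) * exp (-1/t) else 0)"

lemma flat_deriv_0: "flat_deriv 0 t = (if t > 0 then exp (-1/t) else 0)"
  by (simp add: flat_deriv_def)

lemma flat_deriv_has_derivative_pos:
  assumes "t > 0"
  shows "((\<lambda>t. poly (flat_poly n) (1/t) * exp (-1/t)) has_real_derivative flat_deriv (Suc n) t) (at t)"
proof -
  have "((\<lambda>t. poly (flat_poly n) (1/t) * exp (-1/t)) has_real_derivative
      poly (pderiv (flat_poly n)) (1/t) * (- 1 / t^2) * exp (-1/t)
      + poly (flat_poly n) (1/t) * (exp (-1/t) * (1/t^2))) (at t)"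
    using assms
    by (auto intro!: derivative_eq_intros DERIV_chain2[OF poly_DERIV] simp: power2_eq_square field_simps)
  then show ?thesis
    using assms by (simp add: flat_deriv_def algebra_simps power2_eq_square)
qed

lemma flat_deriv_has_derivative_0: "(flat_deriv n has_real_derivative 0) (at 0)"
proof -
  have "((\<lambda>h. (flat_deriv n h - flat_deriv n 0) / h) \<longlongrightarrow> 0) (at_left 0)"
  proof (rule tendsto_eventually)
    show "eventually (\<lambda>h. (flat_deriv n h - flat_deriv n 0) / h = 0) (at_left (0::real))"
      using eventually_at_filter[of "\<lambda>h. h < 0" 0 "{..<0::real}"]
      by (simp add: eventually_mono flat_deriv_def)
  qed
  moreover have "((\<lambda>h. (flat_deriv n h - flat_deriv n 0) / h) \<longlongrightarrow> 0) (at_right 0)"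
  proof (rule Lim_transform_eventually)
    show "((\<lambda>h. poly (pCons 0 (flat_poly n)) (1/h) * exp (-1/h)) \<longlongrightarrow> 0) (at_right 0)"
      by (rule poly_inverse_times_exp_tendsto_0)
    show "eventually (\<lambda>h. poly (pCons 0 (flat_poly n)) (1/h) * exp (-1/h)
        = (flat_deriv n h - flat_deriv n 0) / h) (at_right 0)"
      using eventually_at_right_less[of 0] by eventually_elim (simp add: flat_deriv_def)
  qed
  ultimately show ?thesis
    unfolding DERIV_def by (simp add: filterlim_at_split)
qed

lemma flat_deriv_has_derivative: "(flat_deriv n has_real_derivative flat_deriv (Suc n) t) (at t)"
proof -
  consider "t > 0" | "t < 0" | "t = 0" by linarith
  then show ?thesis
  proof cases
    case 1
    show ?thesis
      by (rule has_field_derivative_transform_within_open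
          [OF flat_deriv_has_derivative_pos[OF 1] open_greaterThan]) (use 1 in \<open>auto simp: flat_deriv_def\<close>)
  next
    case 2
    have "((\<lambda>x. 0) has_real_derivative 0) (at t)" by simp
    then have "(flat_deriv n has_real_derivative 0) (at t)"
      by (rule has_field_derivative_transform_within_open[of _ _ _ "{..<0}"]) (use 2 in \<open>auto simp: flat_deriv_def\<close>)
    then show ?thesis using 2 by (simp add: flat_deriv_def)
  next
    case 3
    then show ?thesis using flat_deriv_has_derivative_0 by (simp add: flat_deriv_def)
  qed
qed

lemma flat_deriv_0_tendsto_1:
  assumes "s > 0"
  shows "(\<lambda>n. flat_deriv 0 (real (Suc n) * s)) \<longlonglongrightarrow> 1"
proof -
  have "filterlim (\<lambda>n. real (Suc n) * s) at_top sequentially"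
    by (rule filterlim_at_top_mult_tendsto_pos[OF tendsto_const assms])
      (rule filterlim_compose[OF filterlim_real_sequentially filterlim_Suc])
  then have "(\<lambda>n. exp (- inverse (real (Suc n) * s))) \<longlonglongrightarrow> exp (- 0)"
    by (intro tendsto_intros tendsto_inverse_0_at_top)
  then show ?thesis
    using assms by (simp add: flat_deriv_0 divide_inverse del: of_nat_Suc)
qed

inductive_set flat_algebra :: "('a::euclidean_space \<Rightarrow> real) set" where
  const: "(\<lambda>x. k) \<in> flat_algebra"
| atom: "(\<lambda>x. flat_deriv n (c * (x \<bullet> i) + e)) \<in> flat_algebra"
| add: "F \<in> flat_algebra \<Longrightarrow> G \<in> flat_algebra \<Longrightarrow> (\<lambda>x. F x + G x) \<in> flat_algebra"
| mult: "F \<in> flat_algebra \<Longrightarrow> G \<in> flat_algebra \<Longrightarrow> (\<lambda>x. F x * G x) \<in> flat_algebra"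

lemma flat_algebra_has_derivative:
  "F \<in> flat_algebra \<Longrightarrow>
    \<exists>F'. (\<forall>x. (F has_derivative F' x) (at x)) \<and> (\<forall>j. (\<lambda>x. F' x j) \<in> flat_algebra)"
proof (induction rule: flat_algebra.induct)
  case (const k)
  show ?case
    by (rule exI[of _ "\<lambda>x h. 0"]) (auto intro: flat_algebra.const)
next
  case (atom n c i e)
  let ?F' = "\<lambda>x h. flat_deriv (Suc n) (c * (x \<bullet> i) + e) * (c * (h \<bullet> i))"
  have "((\<lambda>x. flat_deriv n (c * (x \<bullet> i) + e)) has_derivative ?F' x) (at x)" for x
  proof -
    have "((\<lambda>x. c * (x \<bullet> i) + e) has_derivative (\<lambda>h. c * (h \<bullet> i))) (at x)"
      by (auto intro!: derivative_eq_intros)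
    from has_derivative_compose[OF this flat_deriv_has_derivative[unfolded has_field_derivative_def]]
    show ?thesis by simp
  qed
  moreover have "(\<lambda>x. ?F' x j) \<in> flat_algebra" for j
    by (intro flat_algebra.intros)
  ultimately show ?case by (intro exI[of _ ?F']) simp
next
  case (add F G)
  then obtain F' G' where "\<forall>x. (F has_derivative F' x) (at x)" "\<forall>j. (\<lambda>x. F' x j) \<in> flat_algebra"
    and "\<forall>x. (G has_derivative G' x) (at x)" "\<forall>j. (\<lambda>x. G' x j) \<in> flat_algebra" by blast
  then show ?case
    by (intro exI[of _ "\<lambda>x h. F' x h + G' x h"]) (auto intro!: has_derivative_add flat_algebra.add)
next
  case (mult F G)
  then obtain F' G' where "\<forall>x. (F has_derivative F' x) (at x)" "\<forall>j. (\<lambda>x. F' x j) \<in> flat_algebra"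
    and "\<forall>x. (G has_derivative G' x) (at x)" "\<forall>j. (\<lambda>x. G' x j) \<in> flat_algebra" by blast
  then show ?case
    using mult.hyps
    by (intro exI[of _ "\<lambda>x h. F x * G' x h + F' x h * G x"])
      (auto intro!: has_derivative_mult flat_algebra.add flat_algebra.mult)
qed

lemma flat_algebra_frechet_derivative:
  assumes "F \<in> flat_algebra"
  shows "F differentiable at x" and "(\<lambda>x. frechet_derivative F (at x) j) \<in> flat_algebra"
proof -
  obtain F' where F': "\<forall>x. (F has_derivative F' x) (at x)" "\<forall>j. (\<lambda>x. F' x j) \<in> flat_algebra"
    using flat_algebra_has_derivative[OF assms] by blast
  then show "F differentiable at x"
    unfolding differentiable_def by blast
  have "frechet_derivative F (at x) = F' x" for x
    using F'(1) frechet_derivative_at by metis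
  then show "(\<lambda>x. frechet_derivative F (at x) j) \<in> flat_algebra"
    using F'(2) by simp
qed

lemma smooth_fn_flat_algebra: "F \<in> flat_algebra \<Longrightarrow> smooth_fn F"
proof -
  assume F: "F \<in> flat_algebra"
  have "pd is F \<in> flat_algebra" for "is"
    by (induction "is") (auto intro: F flat_algebra_frechet_derivative)
  then show "smooth_fn F"
    unfolding smooth_fn_def using flat_algebra_frechet_derivative(1) by blast
qed

lemma flat_algebra_prod:
  "finite S \<Longrightarrow> (\<And>i. i \<in> S \<Longrightarrow> f i \<in> flat_algebra) \<Longrightarrow> (\<lambda>x. \<Prod>i\<in>S. f i x) \<in> flat_algebra"
  by (induction S rule: finite_induct) (auto intro: flat_algebra.intros)

definition bump :: "nat \<Rightarrow> 'a::euclidean_space \<Rightarrow> 'a \<Rightarrow> 'a \<Rightarrow> real" where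
  "bump n a b x = (\<Prod>i\<in>Basis. flat_deriv 0 (real (Suc n) * (x \<bullet> i - a \<bullet> i))
                              * flat_deriv 0 (real (Suc n) * (b \<bullet> i - x \<bullet> i)))"

lemma bump_in_flat_algebra: "bump n a b \<in> flat_algebra"
proof -
  have atoms: "(\<lambda>x. flat_deriv 0 (c * (x \<bullet> i - d))) \<in> flat_algebra"
    "(\<lambda>x. flat_deriv 0 (c * (d - x \<bullet> i))) \<in> flat_algebra" for c d :: real and i :: 'a
    using flat_algebra.atom[of 0 c i "- c * d"] flat_algebra.atom[of 0 "- c" i "c * d"]
    by (simp_all add: algebra_simps)
  show ?thesis
    unfolding bump_def[abs_def] by (intro flat_algebra_prod flat_algebra.mult atoms) auto
qed

lemma bump_nonzero_iff: "bump n a b x \<noteq> 0 \<longleftrightarrow> x \<in> box a b"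
proof -
  have "flat_deriv 0 (real (Suc n) * s) \<noteq> 0 \<longleftrightarrow> 0 < s" for s
    by (simp add: flat_deriv_0 zero_less_mult_iff del: of_nat_Suc)
  then show ?thesis
    by (simp add: bump_def prod_zero_iff mem_box del: of_nat_Suc)
qed

lemma abs_bump_le_indicator: "\<bar>bump n a b x\<bar> \<le> indicator (cbox a b) x"
proof -
  have "0 \<le> bump n a b x" "bump n a b x \<le> 1"
    unfolding bump_def
    by (auto intro!: prod_nonneg prod_le_1 mult_le_one simp: flat_deriv_0)
  then show ?thesis
    using bump_nonzero_iff[of n a b x] box_subset_cbox[of a b] by (auto simp: indicator_def)
qed

lemma test_fun_bump: "test_fun UNIV (bump n a b)"
proof -
  have "{x. bump n a b x \<noteq> 0} = box a b"
    using bump_nonzero_iff by blast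
  then show ?thesis
    unfolding test_fun_def using smooth_fn_flat_algebra[OF bump_in_flat_algebra]
    by (simp add: compact_closure bounded_box)
qed

lemma bump_tendsto_indicator: "(\<lambda>n. bump n a b x) \<longlonglongrightarrow> indicator (box a b) x"
proof (cases "x \<in> box a b")
  case True
  then have "(\<lambda>n. bump n a b x) \<longlonglongrightarrow> (\<Prod>i\<in>(Basis::'a set). 1 * 1)"
    unfolding bump_def
    by (intro tendsto_prod tendsto_mult flat_deriv_0_tendsto_1) (auto simp: mem_box)
  then show ?thesis
    using True by simp
next
  case False
  then show ?thesis
    using bump_nonzero_iff[of _ a b x] by simp
qed

section \<open>Square integrable functions and test functions\<close>

lemma L2_lin:
  assumes "L2 u" "L2 w"
  shows "L2 (\<lambda>x. s *\<^sub>R u x + t *\<^sub>R w x)"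
proof -
  have [measurable]: "u \<in> borel_measurable borel" "w \<in> borel_measurable borel"
    using assms by (auto simp: L2_def)
  have bound: "(norm (s *\<^sub>R u x + t *\<^sub>R w x))^2 \<le> 2 * s^2 * (norm (u x))^2 + 2 * t^2 * (norm (w x))^2" for x
  proof -
    have "(norm (s *\<^sub>R u x + t *\<^sub>R w x))^2 \<le> (\<bar>s\<bar> * norm (u x) + \<bar>t\<bar> * norm (w x))^2"
      by (intro power_mono order.trans[OF norm_triangle_ineq]) auto
    also have "\<dots> \<le> 2 * s^2 * (norm (u x))^2 + 2 * t^2 * (norm (w x))^2"
      using sum_squares_bound[of "\<bar>s\<bar> * norm (u x)" "\<bar>t\<bar> * norm (w x)"]
      by (simp add: power2_sum power_mult_distrib)
    finally show ?thesis .
  qed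
  have "integrable lborel (\<lambda>x. 2 * s^2 * (norm (u x))^2 + 2 * t^2 * (norm (w x))^2)"
    using assms by (auto simp: L2_def)
  then have "integrable lborel (\<lambda>x. (norm (s *\<^sub>R u x + t *\<^sub>R w x))^2)"
    by (rule Bochner_Integration.integrable_bound[OF _ _ AE_I2]) (measurable, use bound in simp)
  then show ?thesis
    by (simp add: L2_def)
qed

lemma L2_scaleR: "L2 u \<Longrightarrow> L2 (\<lambda>x. t *\<^sub>R u x)"
  using L2_lin[of u u 0 t] by simp

lemma L2_sum: "finite S \<Longrightarrow> (\<And>i. i \<in> S \<Longrightarrow> L2 (f i)) \<Longrightarrow> L2 (\<lambda>x. \<Sum>i\<in>S. f i x)"
proof (induction S rule: finite_induct)
  case empty
  then show ?case by (simp add: L2_def)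
next
  case (insert i S)
  then have "L2 (\<lambda>x. 1 *\<^sub>R f i x + 1 *\<^sub>R (\<Sum>i\<in>S. f i x))"
    by (intro L2_lin) auto
  then show ?case
    using insert.hyps by simp
qed

lemma L2_inner_right:
  assumes "L2 p"
  shows "L2 (\<lambda>x. p x \<bullet> k)"
proof -
  have [measurable]: "p \<in> borel_measurable borel"
    using assms by (simp add: L2_def)
  have bound: "(p x \<bullet> k)^2 \<le> (norm k)^2 * (norm (p x))^2" for x
    using power_mono[OF Cauchy_Schwarz_ineq2[of "p x" k] abs_ge_zero, of 2]
    by (simp add: power_mult_distrib mult.commute)
  have "integrable lborel (\<lambda>x. (norm k)^2 * (norm (p x))^2)"
    using assms by (simp add: L2_def)
  then have "integrable lborel (\<lambda>x. (norm (p x \<bullet> k))^2)"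
    by (rule Bochner_Integration.integrable_bound[OF _ _ AE_I2]) (measurable, use bound in simp)
  then show ?thesis
    by (simp add: L2_def)
qed

lemma integrable_inner_L2:
  assumes "L2 p" "L2 q"
  shows "integrable lborel (\<lambda>x. p x \<bullet> q x)"
proof -
  have [measurable]: "p \<in> borel_measurable borel" "q \<in> borel_measurable borel"
    using assms by (auto simp: L2_def)
  have bound: "\<bar>p x \<bullet> q x\<bar> \<le> (norm (p x))^2 + (norm (q x))^2" for x
    using Cauchy_Schwarz_ineq2[of "p x" "q x"] sum_squares_bound[of "norm (p x)" "norm (q x)"]
      mult_nonneg_nonneg[OF norm_ge_zero norm_ge_zero, of "p x" "q x"]
    by linarith
  have "integrable lborel (\<lambda>x. (norm (p x))^2 + (norm (q x))^2)"
    using assms by (auto simp: L2_def)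
  then show ?thesis
    by (rule Bochner_Integration.integrable_bound[OF _ _ AE_I2]) (measurable, use bound in simp)
qed

lemma integrable_bounded_scaleR_L2:
  assumes "L2 h" "bounded K" "K \<in> sets borel"
    and \<psi>[measurable]: "\<psi> \<in> borel_measurable borel" and bound: "\<And>x. \<bar>\<psi> x\<bar> \<le> M * indicator K x"
  shows "integrable lborel (\<lambda>x. \<psi> x *\<^sub>R h x)"
proof -
  have [measurable]: "h \<in> borel_measurable borel" "K \<in> sets borel"
    using assms by (auto simp: L2_def)
  have "emeasure lborel K < \<infinity>"
    using emeasure_bounded_finite[OF assms(2)] .
  then have int: "integrable lborel (\<lambda>x. \<bar>M\<bar> * indicator K x + \<bar>M\<bar> * (norm (h x))^2 :: real)"
    using assms(1) by (auto simp: L2_def integrable_indicator_iff)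
  have pointwise: "norm (\<psi> x *\<^sub>R h x) \<le> \<bar>M\<bar> * indicator K x + \<bar>M\<bar> * (norm (h x))^2" for x
  proof (cases "x \<in> K")
    case True
    have "2 * norm (h x) \<le> 1 + (norm (h x))^2"
      using sum_squares_bound[of 1 "norm (h x)"] by simp
    then have "norm (h x) \<le> 1 + (norm (h x))^2"
      using zero_le_power2[of "norm (h x)"] by linarith
    moreover have "\<bar>\<psi> x\<bar> \<le> \<bar>M\<bar>"
      using bound[of x] True by simp
    ultimately have "\<bar>\<psi> x\<bar> * norm (h x) \<le> \<bar>M\<bar> * (1 + (norm (h x))^2)"
      by (intro mult_mono) auto
    then show ?thesis
      using True by (simp add: distrib_left)
  next
    case False
    then show ?thesis
      using bound[of x] by simp
  qed
  show ?thesis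
    by (rule Bochner_Integration.integrable_bound[OF int _ AE_I2]) (measurable, use pointwise in simp)
qed

lemma integrable_indicator_scaleR_L2:
  "L2 h \<Longrightarrow> bounded K \<Longrightarrow> K \<in> sets borel \<Longrightarrow> integrable lborel (\<lambda>x. indicator K x *\<^sub>R h x)"
  by (rule integrable_bounded_scaleR_L2[where M = 1]) (auto split: split_indicator)

lemma pd_eq_0_on_open:
  assumes "open U" "\<And>y. y \<in> U \<Longrightarrow> f y = 0" "x \<in> U"
  shows "pd is f x = 0"
  using assms(3)
proof (induction "is" arbitrary: x)
  case Nil
  then show ?case using assms(2) by simp
next
  case (Cons i "is")
  have "((\<lambda>y. 0) has_derivative (\<lambda>h. 0)) (at x)"
    by simp
  then have "(pd is f has_derivative (\<lambda>h. 0)) (at x)"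
    by (rule has_derivative_transform_within_open[OF _ assms(1) Cons.prems]) (use Cons.IH in auto)
  then show ?case
    by (simp add: frechet_derivative_at[symmetric])
qed

lemma continuous_on_pd_test:
  assumes "test_fun \<Omega> \<psi>" "set is \<subseteq> Basis"
  shows "continuous_on UNIV (pd is \<psi>)"
  using assms
  by (auto intro!: continuous_at_imp_continuous_on differentiable_imp_continuous_within
      simp: test_fun_def smooth_fn_def)

lemma pd_test_outside_support:
  assumes "test_fun \<Omega> \<psi>" "x \<notin> closure {x. \<psi> x \<noteq> 0}"
  shows "pd is \<psi> x = 0"
  by (rule pd_eq_0_on_open[of "- closure {x. \<psi> x \<noteq> 0}"])
    (use assms closure_subset[of "{x. \<psi> x \<noteq> 0}"] in auto)

lemma pd_test_bound:
  fixes \<psi> :: "'a::euclidean_space \<Rightarrow> real"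
  assumes "test_fun \<Omega> \<psi>" "set is \<subseteq> Basis"
  obtains M where "\<And>x. \<bar>pd is \<psi> x\<bar> \<le> M * indicator (closure {x. \<psi> x \<noteq> 0}) x"
proof -
  let ?K = "closure {x. \<psi> x \<noteq> 0}"
  have "compact (pd is \<psi> ` ?K)"
    using assms continuous_on_pd_test[OF assms]
    by (intro compact_continuous_image) (auto simp: test_fun_def intro: continuous_on_subset)
  then obtain M where "\<forall>y \<in> pd is \<psi> ` ?K. norm y \<le> M"
    by (meson compact_imp_bounded bounded_iff)
  then have "\<bar>pd is \<psi> x\<bar> \<le> M * indicator ?K x" for x
    using pd_test_outside_support[OF assms(1)] by (cases "x \<in> ?K") auto
  then show ?thesis ..
qed

lemma integrable_pd_test_scaleR_L2:
  fixes \<psi> :: "'a::euclidean_space \<Rightarrow> real"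
  assumes "test_fun \<Omega> \<psi>" "set is \<subseteq> Basis" "L2 h"
  shows "integrable lborel (\<lambda>x. pd is \<psi> x *\<^sub>R h x)"
proof -
  obtain M where M: "\<And>x. \<bar>pd is \<psi> x\<bar> \<le> M * indicator (closure {x. \<psi> x \<noteq> 0}) x"
    using pd_test_bound[OF assms(1,2)] by blast
  have "pd is \<psi> \<in> borel_measurable borel"
    using continuous_on_pd_test[OF assms(1,2)] by (rule borel_measurable_continuous_onI)
  moreover have "compact (closure {x. \<psi> x \<noteq> 0})"
    using assms(1) by (simp add: test_fun_def)
  ultimately show ?thesis
    using integrable_bounded_scaleR_L2[OF assms(3) compact_imp_bounded borel_closed[OF closed_closure] _ M]
    by blast
qed

lemma integrable_test_scaleR_L2:
  fixes \<psi> :: "'a::euclidean_space \<Rightarrow> real"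
  shows "test_fun \<Omega> \<psi> \<Longrightarrow> L2 h \<Longrightarrow> integrable lborel (\<lambda>x. \<psi> x *\<^sub>R h x)"
  using integrable_pd_test_scaleR_L2[of \<Omega> \<psi> "[]" h] by simp

section \<open>Uniqueness and linearity of weak derivatives\<close>

lemma emeasure_density_pos_eq_neg:
  fixes h :: "'a \<Rightarrow> real"
  assumes [measurable]: "h \<in> borel_measurable M" "A \<in> sets M"
    and integrable: "integrable M (\<lambda>x. indicator A x * h x)"
    and zero: "(\<integral>x. indicator A x * h x \<partial>M) = 0"
  shows "emeasure (density M (\<lambda>x. ennreal (h x))) A = emeasure (density M (\<lambda>x. ennreal (- h x))) A"
    and "emeasure (density M (\<lambda>x. ennreal (h x))) A \<noteq> \<infinity>"
proof -
  let ?g = "\<lambda>x. indicator A x * h x"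
  have "emeasure (density M (\<lambda>x. ennreal (h x))) A = (\<integral>\<^sup>+x. ennreal (h x) * indicator A x \<partial>M)"
    by (rule emeasure_density) measurable
  also have "\<dots> = (\<integral>\<^sup>+x. ennreal (?g x) \<partial>M)"
    by (intro nn_integral_cong) (simp split: split_indicator)
  finally have pos: "emeasure (density M (\<lambda>x. ennreal (h x))) A = (\<integral>\<^sup>+x. ennreal (?g x) \<partial>M)" .
  have "emeasure (density M (\<lambda>x. ennreal (- h x))) A = (\<integral>\<^sup>+x. ennreal (- h x) * indicator A x \<partial>M)"
    by (rule emeasure_density) measurable
  also have "\<dots> = (\<integral>\<^sup>+x. ennreal (- ?g x) \<partial>M)"
    by (intro nn_integral_cong) (simp split: split_indicator)
  finally have neg: "emeasure (density M (\<lambda>x. ennreal (- h x))) A = (\<integral>\<^sup>+x. ennreal (- ?g x) \<partial>M)" .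
  have fin: "(\<integral>\<^sup>+x. ennreal (?g x) \<partial>M) \<noteq> \<infinity>" "(\<integral>\<^sup>+x. ennreal (- ?g x) \<partial>M) \<noteq> \<infinity>"
    using integrable by auto
  have "enn2real (\<integral>\<^sup>+x. ennreal (?g x) \<partial>M) = enn2real (\<integral>\<^sup>+x. ennreal (- ?g x) \<partial>M)"
    using zero real_lebesgue_integral_def[OF integrable] by simp
  then have "ennreal (enn2real (\<integral>\<^sup>+x. ennreal (?g x) \<partial>M)) = ennreal (enn2real (\<integral>\<^sup>+x. ennreal (- ?g x) \<partial>M))"
    by (rule arg_cong)
  then show "emeasure (density M (\<lambda>x. ennreal (h x))) A = emeasure (density M (\<lambda>x. ennreal (- h x))) A"
    "emeasure (density M (\<lambda>x. ennreal (h x))) A \<noteq> \<infinity>"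
    unfolding pos neg using fin by (simp_all add: ennreal_enn2real_if)
qed

lemma UN_box_One_eq_UNIV: "(\<Union>n. box (- real n *\<^sub>R One) (real n *\<^sub>R One)) = (UNIV :: 'a::euclidean_space set)"
proof -
  have "x \<in> (\<Union>n. box (- real n *\<^sub>R One) (real n *\<^sub>R One))" for x :: 'a
  proof -
    obtain n where "norm x < real n"
      using reals_Archimedean2 by blast
    then have "x \<in> box (- real n *\<^sub>R One) (real n *\<^sub>R One)"
      using Basis_le_norm[of _ x] by (force simp: mem_box abs_less_iff)
    then show ?thesis by blast
  qed
  then show ?thesis by blast
qed

lemma AE_zero_if_box_integrals_zero:
  fixes h :: "'a::euclidean_space \<Rightarrow> real"
  assumes [measurable]: "h \<in> borel_measurable borel"
    and integrable: "\<And>a b. integrable lborel (\<lambda>x. indicator (box a b) x * h x)"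
    and zero: "\<And>a b. (\<integral>x. indicator (box a b) x * h x \<partial>lborel) = 0"
  shows "AE x in lborel. h x = 0"
proof -
  let ?boxes = "range (\<lambda>(a, b). box a b :: 'a set)"
  let ?pos = "density lborel (\<lambda>x. ennreal (h x))" and ?neg = "density lborel (\<lambda>x. ennreal (- h x))"
  \<comment> \<open>the densities \<open>h\<^sup>+\<close> and \<open>h\<^sup>-\<close> define the same measure on boxes, hence on all Borel sets\<close>
  have box: "emeasure ?pos (box a b) = emeasure ?neg (box a b)" for a b
    by (rule emeasure_density_pos_eq_neg(1)[OF _ _ integrable zero]) measurable
  have box_finite: "emeasure ?pos (box a b) \<noteq> \<infinity>" for a b
    by (rule emeasure_density_pos_eq_neg(2)[OF _ _ integrable zero]) measurable
  have "?pos = ?neg"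
  proof (rule measure_eqI_generator_eq[where \<Omega> = UNIV and E = ?boxes
        and A = "\<lambda>n. box (- real n *\<^sub>R One) (real n *\<^sub>R One)"])
    show "Int_stable ?boxes"
      by (auto simp: Int_stable_def box_Int_box)
    show "sets ?pos = sigma_sets UNIV ?boxes" "sets ?neg = sigma_sets UNIV ?boxes"
      by (simp_all add: borel_eq_box)
    show "?boxes \<subseteq> Pow UNIV"
      by simp
    show "range (\<lambda>n. box (- real n *\<^sub>R One) (real n *\<^sub>R One)) \<subseteq> ?boxes"
      by (auto intro: rev_image_eqI[of "(- real _ *\<^sub>R One, real _ *\<^sub>R One)"])
    show "X \<in> ?boxes \<Longrightarrow> emeasure ?pos X = emeasure ?neg X" for X
      using box by auto
    show "emeasure ?pos (box (- real n *\<^sub>R One) (real n *\<^sub>R One)) \<noteq> \<infinity>" for n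
      by (rule box_finite)
  qed (rule UN_box_One_eq_UNIV)
  then have "AE x in lborel. ennreal (h x) = ennreal (- h x)"
    by (intro sigma_finite_measure.density_unique[OF sigma_finite_lborel]) measurable
  then show ?thesis
    by eventually_elim (metis ennreal_eq_0_iff ennreal_neg neg_le_0_iff_le linorder_linear order_antisym)
qed

lemma integral_bump_tendsto:
  fixes g :: "'a::euclidean_space \<Rightarrow> real"
  assumes [measurable]: "g \<in> borel_measurable borel"
    and "integrable lborel (\<lambda>x. indicator (cbox a b) x * g x)"
  shows "(\<lambda>n. \<integral>x. bump n a b x * g x \<partial>lborel) \<longlonglongrightarrow> (\<integral>x. indicator (box a b) x * g x \<partial>lborel)"
proof (rule integral_dominated_convergence[where w = "\<lambda>x. indicator (cbox a b) x * \<bar>g x\<bar>"])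
  have [measurable]: "bump n a b \<in> borel_measurable borel" for n
    using continuous_on_pd_test[OF test_fun_bump, of "[]"] by (intro borel_measurable_continuous_onI) simp
  then show "(\<lambda>x. bump n a b x * g x) \<in> borel_measurable lborel" for n
    by measurable
  show "integrable lborel (\<lambda>x. indicator (cbox a b) x * \<bar>g x\<bar>)"
    using integrable_abs[OF assms(2)] by (simp add: abs_mult)
  show "AE x in lborel. (\<lambda>n. bump n a b x * g x) \<longlonglongrightarrow> indicator (box a b) x * g x"
    by (intro AE_I2 tendsto_mult bump_tendsto_indicator tendsto_const)
  show "AE x in lborel. norm (bump n a b x * g x) \<le> indicator (cbox a b) x * \<bar>g x\<bar>" for n
    using abs_bump_le_indicator[of n a b] by (intro AE_I2) (simp add: abs_mult mult_right_mono)
qed measurable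

lemma AE_zero_if_test_integrals_zero:
  fixes h :: "'a::euclidean_space \<Rightarrow> 'b::euclidean_space"
  assumes h: "L2 h"
    and zero: "\<And>\<psi>::'a \<Rightarrow> real. test_fun UNIV \<psi> \<Longrightarrow> (\<integral>x. \<psi> x *\<^sub>R h x \<partial>lborel) = 0"
  shows "AE x in lborel. h x = 0"
proof -
  have "AE x in lborel. h x \<bullet> k = 0" for k
  proof (rule AE_zero_if_box_integrals_zero)
    have hk: "L2 (\<lambda>x. h x \<bullet> k)"
      using h by (rule L2_inner_right)
    then show hk_meas: "(\<lambda>x. h x \<bullet> k) \<in> borel_measurable borel"
      by (simp add: L2_def)
    have local: "integrable lborel (\<lambda>x. indicator K x * (h x \<bullet> k))" if "bounded K" "K \<in> sets borel" for K
      using integrable_indicator_scaleR_L2[OF hk that] by simp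
    then show "integrable lborel (\<lambda>x. indicator (box a b) x * (h x \<bullet> k))" for a b :: 'a
      by (simp add: bounded_box)
    fix a b :: 'a
    have "(\<integral>x. bump n a b x * (h x \<bullet> k) \<partial>lborel) = (\<integral>x. bump n a b x *\<^sub>R h x \<partial>lborel) \<bullet> k" for n
      using integral_inner_left[OF integrable_test_scaleR_L2[OF test_fun_bump h]] by simp
    then have "(\<lambda>n. \<integral>x. bump n a b x * (h x \<bullet> k) \<partial>lborel) = (\<lambda>n. 0)"
      using zero[OF test_fun_bump] by simp
    moreover have "(\<lambda>n. \<integral>x. bump n a b x * (h x \<bullet> k) \<partial>lborel)
        \<longlonglongrightarrow> (\<integral>x. indicator (box a b) x * (h x \<bullet> k) \<partial>lborel)"
      using hk_meas local[of "cbox a b"] by (intro integral_bump_tendsto) (auto simp: bounded_cbox)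
    ultimately show "(\<integral>x. indicator (box a b) x * (h x \<bullet> k) \<partial>lborel) = 0"
      by (simp add: LIMSEQ_const_iff)
  qed
  then have "AE x in lborel. \<forall>k\<in>Basis. h x \<bullet> k = 0"
    by (simp add: AE_finite_allI)
  then show ?thesis
    by eventually_elim (simp add: euclidean_all_zero_iff)
qed

lemma weak_deriv_unique:
  assumes "L2 g1" "L2 g2" "weak_deriv is u g1" "weak_deriv is u g2"
  shows "AE x in lborel. g1 x = g2 x"
proof -
  have "AE x in lborel. g1 x - g2 x = 0"
  proof (rule AE_zero_if_test_integrals_zero)
    show "L2 (\<lambda>x. g1 x - g2 x)"
      using L2_lin[OF assms(1,2), of 1 "-1"] by simp
    fix \<psi> :: "'a \<Rightarrow> real"
    assume \<psi>: "test_fun UNIV \<psi>"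
    have "(-1::real) ^ length is *\<^sub>R (\<integral>x. \<psi> x *\<^sub>R g1 x \<partial>lborel)
        = (-1) ^ length is *\<^sub>R (\<integral>x. \<psi> x *\<^sub>R g2 x \<partial>lborel)"
      using assms(3,4) \<psi> unfolding weak_deriv_def by metis
    then have "(\<integral>x. \<psi> x *\<^sub>R g1 x \<partial>lborel) = (\<integral>x. \<psi> x *\<^sub>R g2 x \<partial>lborel)"
      by simp
    then show "(\<integral>x. \<psi> x *\<^sub>R (g1 x - g2 x) \<partial>lborel) = 0"
      by (simp add: scaleR_diff_right Bochner_Integration.integral_diff
          [OF integrable_test_scaleR_L2[OF \<psi> assms(1)] integrable_test_scaleR_L2[OF \<psi> assms(2)]])
  qed
  then show ?thesis
    by simp
qed

lemma weak_deriv_scaleR: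
  assumes "weak_deriv is z g"
  shows "weak_deriv is (\<lambda>x. t *\<^sub>R z x) (\<lambda>x. t *\<^sub>R g x)"
  unfolding weak_deriv_def
proof (intro allI impI)
  fix \<psi> :: "'a \<Rightarrow> real"
  assume \<psi>: "test_fun UNIV \<psi>"
  have "(\<integral>x. pd is \<psi> x *\<^sub>R (t *\<^sub>R z x) \<partial>lborel) = t *\<^sub>R (\<integral>x. pd is \<psi> x *\<^sub>R z x \<partial>lborel)"
    by (simp only: scaleR_left_commute[of _ t] integral_scaleR_right)
  also have "\<dots> = (-1) ^ length is *\<^sub>R (t *\<^sub>R (\<integral>x. \<psi> x *\<^sub>R g x \<partial>lborel))"
    using assms \<psi> unfolding weak_deriv_def by (simp only: scaleR_left_commute[of t])
  also have "t *\<^sub>R (\<integral>x. \<psi> x *\<^sub>R g x \<partial>lborel) = (\<integral>x. \<psi> x *\<^sub>R (t *\<^sub>R g x) \<partial>lborel)"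
    by (simp only: scaleR_left_commute[of _ t] integral_scaleR_right)
  finally show "(\<integral>x. pd is \<psi> x *\<^sub>R (t *\<^sub>R z x) \<partial>lborel)
      = (-1) ^ length is *\<^sub>R (\<integral>x. \<psi> x *\<^sub>R (t *\<^sub>R g x) \<partial>lborel)" .
qed

lemma weak_deriv_add:
  assumes "weak_deriv is u g1" "weak_deriv is w g2" "set is \<subseteq> Basis"
    and L2: "L2 u" "L2 w" "L2 g1" "L2 g2"
  shows "weak_deriv is (\<lambda>x. u x + w x) (\<lambda>x. g1 x + g2 x)"
  unfolding weak_deriv_def
proof (intro allI impI)
  fix \<psi> :: "'a \<Rightarrow> real"
  assume \<psi>: "test_fun UNIV \<psi>"
  have "(\<integral>x. pd is \<psi> x *\<^sub>R (u x + w x) \<partial>lborel)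
      = (\<integral>x. pd is \<psi> x *\<^sub>R u x \<partial>lborel) + (\<integral>x. pd is \<psi> x *\<^sub>R w x \<partial>lborel)"
    by (simp add: scaleR_add_right Bochner_Integration.integral_add
        integrable_pd_test_scaleR_L2[OF \<psi> assms(3)] L2)
  also have "\<dots> = (-1) ^ length is *\<^sub>R ((\<integral>x. \<psi> x *\<^sub>R g1 x \<partial>lborel) + (\<integral>x. \<psi> x *\<^sub>R g2 x \<partial>lborel))"
    using assms(1,2) \<psi> by (simp add: weak_deriv_def scaleR_add_right)
  also have "\<dots> = (-1) ^ length is *\<^sub>R (\<integral>x. \<psi> x *\<^sub>R (g1 x + g2 x) \<partial>lborel)"
    by (simp add: scaleR_add_right Bochner_Integration.integral_add integrable_test_scaleR_L2[OF \<psi>] L2)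
  finally show "(\<integral>x. pd is \<psi> x *\<^sub>R (u x + w x) \<partial>lborel)
      = (-1) ^ length is *\<^sub>R (\<integral>x. \<psi> x *\<^sub>R (g1 x + g2 x) \<partial>lborel)" .
qed

lemma weak_deriv_lin:
  assumes "weak_deriv is u g1" "weak_deriv is w g2" "set is \<subseteq> Basis" "L2 u" "L2 w" "L2 g1" "L2 g2"
  shows "weak_deriv is (\<lambda>x. s *\<^sub>R u x + t *\<^sub>R w x) (\<lambda>x. s *\<^sub>R g1 x + t *\<^sub>R g2 x)"
  using assms by (intro weak_deriv_add weak_deriv_scaleR L2_scaleR)

lemma wD_weak_deriv:
  "\<exists>g. L2 g \<and> weak_deriv is u g \<Longrightarrow> L2 (wD is u) \<and> weak_deriv is u (wD is u)"
  unfolding wD_def by (rule someI_ex[of "\<lambda>g. L2 g \<and> weak_deriv is u g"])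

lemma sobolev_wD:
  "sobolev m u \<Longrightarrow> set is \<subseteq> Basis \<Longrightarrow> length is \<le> m \<Longrightarrow> L2 (wD is u) \<and> weak_deriv is u (wD is u)"
  by (rule wD_weak_deriv) (auto simp: sobolev_def)

lemma sobolev_lin:
  assumes "sobolev m u" "sobolev m w"
  shows "sobolev m (\<lambda>x. s *\<^sub>R u x + t *\<^sub>R w x)"
  unfolding sobolev_def
proof (intro conjI allI impI)
  show "L2 (\<lambda>x. s *\<^sub>R u x + t *\<^sub>R w x)"
    using assms by (intro L2_lin) (auto simp: sobolev_def)
  fix "is" :: "'a list"
  assume "set is \<subseteq> Basis \<and> length is \<le> m"
  then show "\<exists>g. L2 g \<and> weak_deriv is (\<lambda>x. s *\<^sub>R u x + t *\<^sub>R w x) g"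
    using sobolev_wD[OF assms(1)] sobolev_wD[OF assms(2)] assms
    by (intro exI[of _ "\<lambda>x. s *\<^sub>R wD is u x + t *\<^sub>R wD is w x"] conjI L2_lin weak_deriv_lin)
      (auto simp: sobolev_def)
qed

lemma wD_lin_AE:
  assumes "sobolev m u" "sobolev m w" "set is \<subseteq> Basis" "length is \<le> m"
  shows "AE x in lborel. wD is (\<lambda>x. s *\<^sub>R u x + t *\<^sub>R w x) x = s *\<^sub>R wD is u x + t *\<^sub>R wD is w x"
proof (rule weak_deriv_unique)
  show "L2 (wD is (\<lambda>x. s *\<^sub>R u x + t *\<^sub>R w x))" "weak_deriv is (\<lambda>x. s *\<^sub>R u x + t *\<^sub>R w x) (wD is (\<lambda>x. s *\<^sub>R u x + t *\<^sub>R w x))"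
    using sobolev_wD[OF sobolev_lin[OF assms(1,2)] assms(3,4)] by auto
  show "L2 (\<lambda>x. s *\<^sub>R wD is u x + t *\<^sub>R wD is w x)"
    "weak_deriv is (\<lambda>x. s *\<^sub>R u x + t *\<^sub>R w x) (\<lambda>x. s *\<^sub>R wD is u x + t *\<^sub>R wD is w x)"
    using sobolev_wD[OF assms(1,3,4)] sobolev_wD[OF assms(2,3,4)] assms
    by (auto intro!: L2_lin weak_deriv_lin simp: sobolev_def)
qed

lemma wdiv_lin_AE:
  fixes u w :: "'a::euclidean_space \<Rightarrow> 'a"
  assumes "sobolev 1 u" "sobolev 1 w"
  shows "AE x in lborel. wdiv (\<lambda>x. s *\<^sub>R u x + t *\<^sub>R w x) x = s * wdiv u x + t * wdiv w x"
proof -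
  have "AE x in lborel. \<forall>j\<in>Basis. wD [j] (\<lambda>x. s *\<^sub>R u x + t *\<^sub>R w x) x = s *\<^sub>R wD [j] u x + t *\<^sub>R wD [j] w x"
    using assms by (intro AE_finite_allI wD_lin_AE) auto
  then show ?thesis
    by eventually_elim (simp add: wdiv_def inner_add_left sum.distrib sum_distrib_left)
qed

lemma L2_wdiv:
  fixes u :: "'a::euclidean_space \<Rightarrow> 'a"
  assumes "sobolev 1 u"
  shows "L2 (wdiv u)"
  unfolding wdiv_def[abs_def] using sobolev_wD[OF assms]
  by (intro L2_sum L2_inner_right) auto

lemma integral_sq_wD_scaleR:
  assumes "\<exists>g. L2 g \<and> weak_deriv is z g"
  shows "(\<integral>x. (norm (wD is (\<lambda>x. t *\<^sub>R z x) x))^2 \<partial>lborel) = t^2 * (\<integral>x. (norm (wD is z x))^2 \<partial>lborel)"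
proof -
  have z: "L2 (wD is z)" "weak_deriv is z (wD is z)"
    using wD_weak_deriv[OF assms] by auto
  then have "\<exists>g. L2 g \<and> weak_deriv is (\<lambda>x. t *\<^sub>R z x) g"
    by (blast intro: L2_scaleR weak_deriv_scaleR)
  then have tz: "L2 (wD is (\<lambda>x. t *\<^sub>R z x))" "weak_deriv is (\<lambda>x. t *\<^sub>R z x) (wD is (\<lambda>x. t *\<^sub>R z x))"
    using wD_weak_deriv by auto
  have [measurable]: "wD is z \<in> borel_measurable borel" "wD is (\<lambda>x. t *\<^sub>R z x) \<in> borel_measurable borel"
    using z(1) tz(1) by (auto simp: L2_def)
  have "AE x in lborel. wD is (\<lambda>x. t *\<^sub>R z x) x = t *\<^sub>R wD is z x"
    by (rule weak_deriv_unique[OF tz(1) L2_scaleR[OF z(1)] tz(2) weak_deriv_scaleR[OF z(2)]])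
  then have ae: "AE x in lborel. (norm (wD is (\<lambda>x. t *\<^sub>R z x) x))^2 = (norm (t *\<^sub>R wD is z x))^2"
    by eventually_elim simp
  have "(\<integral>x. (norm (wD is (\<lambda>x. t *\<^sub>R z x) x))^2 \<partial>lborel) = (\<integral>x. (norm (t *\<^sub>R wD is z x))^2 \<partial>lborel)"
    by (rule integral_cong_AE[OF _ _ ae]) measurable
  then show ?thesis
    by (simp add: power_mult_distrib)
qed

lemma wD_scaleR_no_weak_deriv:
  assumes "t \<noteq> 0" and none: "\<nexists>g. L2 g \<and> weak_deriv is z g"
  shows "wD is (\<lambda>x. t *\<^sub>R z x) = wD is z"
proof -
  have "\<nexists>g. L2 g \<and> weak_deriv is (\<lambda>x. t *\<^sub>R z x) g"
  proof
    assume "\<exists>g. L2 g \<and> weak_deriv is (\<lambda>x. t *\<^sub>R z x) g"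
    then obtain g where "L2 (\<lambda>x. inverse t *\<^sub>R g x)" "weak_deriv is z (\<lambda>x. inverse t *\<^sub>R g x)"
      using weak_deriv_scaleR[of "is" "\<lambda>x. t *\<^sub>R z x" _ "inverse t"] assms(1) by (auto intro: L2_scaleR)
    with none show False
      by blast
  qed
  with none have "(\<lambda>g. L2 g \<and> weak_deriv is (\<lambda>x. t *\<^sub>R z x) g) = (\<lambda>g. L2 g \<and> weak_deriv is z g)"
    by blast
  then show ?thesis
    by (simp add: wD_def)
qed

text \<open>When \<open>z\<close> has no weak derivative, \<open>wD is z\<close> is the junk value \<open>SOME g. False\<close>. This case
  cannot be excluded below, since \<open>\<psi> k - \<phi>\<close> in the definition of \<open>H0\<close> is not known to be Sobolev.\<close>

lemma integral_sq_wD_scaleR_le: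
  "(\<integral>x. (norm (wD is (\<lambda>x. t *\<^sub>R z x) x))^2 \<partial>lborel)
    \<le> (max 1 \<bar>t\<bar>)^2 * (\<integral>x. (norm (wD is z x))^2 \<partial>lborel)"
proof -
  let ?I = "\<lambda>z. \<integral>x. (norm (wD is z x))^2 \<partial>lborel"
  have nonneg: "0 \<le> ?I z"
    by simp
  have t_le: "t^2 \<le> (max 1 \<bar>t\<bar>)^2"
    by (metis abs_ge_zero max.cobounded2 power2_abs power_mono)
  have one_le: "1 \<le> (max 1 \<bar>t\<bar>)^2"
    by (simp add: le_max_iff_disj)
  consider "\<exists>g. L2 g \<and> weak_deriv is z g" | "t = 0" | "t \<noteq> 0" "\<nexists>g. L2 g \<and> weak_deriv is z g"
    by blast
  then show ?thesis
  proof cases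
    case 1
    then show ?thesis
      using mult_right_mono[OF t_le nonneg] by (simp add: integral_sq_wD_scaleR)
  next
    case 2
    have "\<exists>g. L2 g \<and> weak_deriv is (\<lambda>x. 0::'b) g"
      by (intro exI[of _ "\<lambda>x. 0"]) (simp add: L2_def weak_deriv_def)
    from integral_sq_wD_scaleR[OF this, of 0] show ?thesis
      using 2 mult_nonneg_nonneg[OF _ nonneg] by simp
  next
    case 3
    then show ?thesis
      using mult_right_mono[OF one_le nonneg] by (simp add: wD_scaleR_no_weak_deriv)
  qed
qed

lemma sob_norm_nonneg: "0 \<le> sob_norm m z"
  by (simp add: sob_norm_def sum_nonneg)

lemma sob_norm_scaleR_le: "sob_norm m (\<lambda>x. t *\<^sub>R z x) \<le> max 1 \<bar>t\<bar> * sob_norm m z"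
proof -
  let ?S = "{is. set is \<subseteq> (Basis::'a set) \<and> length is \<le> m}"
  have "(\<Sum>is\<in>?S. \<integral>x. (norm (wD is (\<lambda>x. t *\<^sub>R z x) x))^2 \<partial>lborel)
      \<le> (max 1 \<bar>t\<bar>)^2 * (\<Sum>is\<in>?S. \<integral>x. (norm (wD is z x))^2 \<partial>lborel)"
    unfolding sum_distrib_left by (intro sum_mono integral_sq_wD_scaleR_le)
  then have "sqrt (\<Sum>is\<in>?S. \<integral>x. (norm (wD is (\<lambda>x. t *\<^sub>R z x) x))^2 \<partial>lborel)
      \<le> sqrt ((max 1 \<bar>t\<bar>)^2 * (\<Sum>is\<in>?S. \<integral>x. (norm (wD is z x))^2 \<partial>lborel))"
    by (rule real_sqrt_le_mono)
  also have "\<dots> = max 1 \<bar>t\<bar> * sqrt (\<Sum>is\<in>?S. \<integral>x. (norm (wD is z x))^2 \<partial>lborel)"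
    by (simp add: real_sqrt_mult)
  finally show ?thesis
    unfolding sob_norm_def .
qed

lemma pd_scaleR:
  assumes "smooth_fn \<psi>" "set is \<subseteq> Basis"
  shows "pd is (\<lambda>x. t *\<^sub>R \<psi> x) = (\<lambda>x. t *\<^sub>R pd is \<psi> x)"
  using assms(2)
proof (induction "is")
  case Nil
  then show ?case by simp
next
  case (Cons i "is")
  have "(pd is \<psi> has_derivative frechet_derivative (pd is \<psi>) (at x)) (at x)" for x
    using assms(1) Cons.prems by (auto simp: smooth_fn_def frechet_derivative_works)
  then have "((\<lambda>x. t *\<^sub>R pd is \<psi> x) has_derivative (\<lambda>h. t *\<^sub>R frechet_derivative (pd is \<psi>) (at x) h)) (at x)" for x
    by (rule has_derivative_scaleR_right)
  then have "frechet_derivative (\<lambda>x. t *\<^sub>R pd is \<psi> x) (at x) = (\<lambda>h. t *\<^sub>R frechet_derivative (pd is \<psi>) (at x) h)" for x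
    by (rule frechet_derivative_at[symmetric])
  then show ?case
    using Cons by simp
qed

lemma test_fun_scaleR:
  assumes "test_fun \<Omega> \<psi>"
  shows "test_fun \<Omega> (\<lambda>x. t *\<^sub>R \<psi> x)"
proof -
  have \<psi>: "smooth_fn \<psi>" "compact (closure {x. \<psi> x \<noteq> 0})" "closure {x. \<psi> x \<noteq> 0} \<subseteq> \<Omega>"
    using assms by (auto simp: test_fun_def)
  have "smooth_fn (\<lambda>x. t *\<^sub>R \<psi> x)"
    unfolding smooth_fn_def
  proof (intro allI impI)
    fix "is" :: "'a list" and x :: 'a
    assume "is": "set is \<subseteq> Basis"
    then have "pd is \<psi> differentiable at x"
      using \<psi>(1) by (simp add: smooth_fn_def)
    then show "pd is (\<lambda>x. t *\<^sub>R \<psi> x) differentiable at x"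
      by (simp add: pd_scaleR[OF \<psi>(1) "is"])
  qed
  moreover have sub: "{x. t *\<^sub>R \<psi> x \<noteq> 0} \<subseteq> {x. \<psi> x \<noteq> 0}"
    by auto
  then have "compact (closure {x. t *\<^sub>R \<psi> x \<noteq> 0})"
    using \<psi>(2) by (simp add: bounded_subset)
  ultimately show ?thesis
    using closure_mono[OF sub] \<psi>(3) unfolding test_fun_def by blast
qed

lemma H0_scaleR:
  assumes "\<phi> \<in> H0 m \<Omega>"
  shows "(\<lambda>x. t *\<^sub>R \<phi> x) \<in> H0 m \<Omega>"
proof -
  obtain \<psi> where \<psi>: "\<And>k. test_fun \<Omega> (\<psi> k)" "(\<lambda>k. sob_norm m (\<lambda>x. \<psi> k x - \<phi> x)) \<longlonglongrightarrow> 0"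
    using assms by (auto simp: H0_def)
  have "sobolev m (\<lambda>x. 0 *\<^sub>R \<phi> x + t *\<^sub>R \<phi> x)"
    using assms by (intro sobolev_lin) (auto simp: H0_def)
  moreover have "(\<lambda>k. sob_norm m (\<lambda>x. t *\<^sub>R \<psi> k x - t *\<^sub>R \<phi> x)) \<longlonglongrightarrow> 0"
  proof (rule Lim_null_comparison)
    have "sob_norm m (\<lambda>x. t *\<^sub>R \<psi> k x - t *\<^sub>R \<phi> x) \<le> max 1 \<bar>t\<bar> * sob_norm m (\<lambda>x. \<psi> k x - \<phi> x)" for k
      using sob_norm_scaleR_le[of m t "\<lambda>x. \<psi> k x - \<phi> x"] by (simp add: scaleR_diff_right)
    then show "\<forall>\<^sub>F k in sequentially. norm (sob_norm m (\<lambda>x. t *\<^sub>R \<psi> k x - t *\<^sub>R \<phi> x))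
        \<le> max 1 \<bar>t\<bar> * sob_norm m (\<lambda>x. \<psi> k x - \<phi> x)"
      by (simp add: sob_norm_nonneg)
    show "(\<lambda>k. max 1 \<bar>t\<bar> * sob_norm m (\<lambda>x. \<psi> k x - \<phi> x)) \<longlonglongrightarrow> 0"
      using tendsto_mult_right_zero[OF \<psi>(2)] .
  qed
  ultimately show ?thesis
    unfolding H0_def mem_Collect_eq using test_fun_scaleR[OF \<psi>(1)]
    by (intro conjI exI[of _ "\<lambda>k x. t *\<^sub>R \<psi> k x"]) simp_all
qed

section \<open>First variation of a local quasiminimizer\<close>

text \<open>With \<open>\<theta>\<^sup>2 R\<^sup>d = c\<close>, every perturbation \<open>t \<phi>\<close> with \<open>t\<^sup>2 \<integral> \<tau>(\<phi>) = \<theta>\<^sup>2 r\<^sup>d\<close> is admissible for all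
  \<open>r \<le> R\<close>; inserting it into the quasiminimality inequality gives the constant.\<close>

definition quasimin_const :: "real \<Rightarrow> real \<Rightarrow> real \<Rightarrow> nat \<Rightarrow> real" where
  "quasimin_const C c R d = (let \<theta> = sqrt c / R powr (real d / 2) in (\<theta>^2 + C) / (2 * \<theta>))"

lemma abs_le_of_quadratic_lower_bound:
  fixes X T :: real
  assumes "C > 0" "c > 0" "R > 0" "0 < r" "r \<le> R" "T \<ge> 0"
    and lower: "\<And>t. t^2 * T \<le> c \<Longrightarrow> - (C * r ^ d) \<le> 2 * t * X + t^2 * T"
  shows "\<bar>X\<bar> \<le> quasimin_const C c R d * r powr (real d / 2) * sqrt T"
proof -
  define \<rho> where "\<rho> = r powr (real d / 2)"
  define \<theta> where "\<theta> = sqrt c / R powr (real d / 2)"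
  have \<rho>: "\<rho> > 0" "\<rho> \<le> R powr (real d / 2)"
    using assms by (auto simp: \<rho>_def powr_mono2)
  have "\<rho>^2 = r powr (real d / 2 + real d / 2)"
    unfolding \<rho>_def power2_eq_square powr_add ..
  then have \<rho>_sq: "\<rho>^2 = r ^ d"
    using \<open>0 < r\<close> by (simp add: powr_realpow)
  have \<theta>: "\<theta> > 0"
    using assms by (simp add: \<theta>_def)
  have "\<theta> * \<rho> \<le> sqrt c / R powr (real d / 2) * R powr (real d / 2)"
    unfolding \<theta>_def using \<rho> assms by (intro mult_left_mono) auto
  then have "\<theta> * \<rho> \<le> sqrt c"
    using assms by simp
  then have admissible: "(\<theta> * \<rho>)^2 \<le> c"
    using \<theta> \<rho> assms by (metis less_le mult_pos_pos power_mono real_sqrt_pow2)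
  show ?thesis
  proof (cases "T = 0")
    case True
    have "X = 0"
    proof (rule ccontr)
      assume "X \<noteq> 0"
      with lower[of "- (C * r ^ d + 1) / (2 * X)"] True assms show False
        by simp
    qed
    with True show ?thesis
      by simp
  next
    case False
    define s where "s = sqrt T"
    have s: "s > 0" "s^2 = T"
      using False \<open>T \<ge> 0\<close> by (auto simp: s_def)
    define t where "t = (if X > 0 then - \<theta> * \<rho> / s else \<theta> * \<rho> / s)"
    have "t^2 * T = (\<theta> * \<rho>)^2" "2 * t * X = - 2 * \<theta> * \<rho> * \<bar>X\<bar> / s"
      using s by (auto simp: t_def power_divide)
    with lower[of t] admissible \<rho>_sq have "2 * \<theta> * \<rho> * \<bar>X\<bar> / s \<le> C * \<rho>^2 + (\<theta> * \<rho>)^2"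
      by simp
    then have "(2 * \<theta> * \<rho>) * \<bar>X\<bar> \<le> (C * \<rho>^2 + (\<theta> * \<rho>)^2) * s"
      using s by (simp add: pos_divide_le_eq)
    also have "\<dots> = (2 * \<theta> * \<rho>) * ((\<theta>^2 + C) / (2 * \<theta>) * \<rho> * s)"
      using \<theta> by (simp add: field_simps power2_eq_square)
    finally have "\<bar>X\<bar> \<le> (\<theta>^2 + C) / (2 * \<theta>) * \<rho> * s"
      by (rule mult_left_le_imp_le) (use \<theta> \<rho> in simp)
    then show ?thesis
      by (simp add: quasimin_const_def \<theta>_def \<rho>_def s_def Let_def)
  qed
qed

definition quadratic_energy ::
  "('a::euclidean_space \<Rightarrow> 'b::real_vector) set \<Rightarrow> (('a \<Rightarrow> 'b) \<Rightarrow> ('a \<Rightarrow> 'b) \<Rightarrow> 'a \<Rightarrow> real) \<Rightarrow> bool" where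
  "quadratic_energy S \<tau> \<longleftrightarrow>
     (\<forall>u\<in>S. \<forall>w\<in>S. \<forall>s t. (\<lambda>x. s *\<^sub>R u x + t *\<^sub>R w x) \<in> S) \<and>
     (\<forall>u\<in>S. \<forall>w\<in>S. integrable lborel (\<tau> u w)) \<and>
     (\<forall>u\<in>S. \<forall>x. 0 \<le> \<tau> u u x) \<and>
     (\<forall>u\<in>S. \<forall>w\<in>S. \<forall>s t. AE x in lborel.
        \<tau> (\<lambda>x. s *\<^sub>R u x + t *\<^sub>R w x) (\<lambda>x. s *\<^sub>R u x + t *\<^sub>R w x) x
          = s^2 * \<tau> u u x + 2 * s * t * \<tau> u w x + t^2 * \<tau> w w x)"

lemma quadratic_energyI:
  assumes "\<And>u w s t. u \<in> S \<Longrightarrow> w \<in> S \<Longrightarrow> (\<lambda>x. s *\<^sub>R u x + t *\<^sub>R w x) \<in> S"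
    and "\<And>u w. u \<in> S \<Longrightarrow> w \<in> S \<Longrightarrow> integrable lborel (\<tau> u w)"
    and "\<And>u x. u \<in> S \<Longrightarrow> 0 \<le> \<tau> u u x"
    and "\<And>u w s t. u \<in> S \<Longrightarrow> w \<in> S \<Longrightarrow> AE x in lborel.
      \<tau> (\<lambda>x. s *\<^sub>R u x + t *\<^sub>R w x) (\<lambda>x. s *\<^sub>R u x + t *\<^sub>R w x) x
        = s^2 * \<tau> u u x + 2 * s * t * \<tau> u w x + t^2 * \<tau> w w x"
  shows "quadratic_energy S \<tau>"
  using assms by (simp add: quadratic_energy_def)

lemma set_integral_le_integral:
  fixes g :: "'a \<Rightarrow> real"
  assumes "integrable M g" "\<And>x. 0 \<le> g x" "A \<in> sets M"
  shows "(LINT x:A|M. g x) \<le> integral\<^sup>L M g"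
  unfolding set_lebesgue_integral_def using assms
  by (intro integral_mono integrable_mult_indicator) (auto split: split_indicator)

lemma quadratic_energyD:
  assumes "quadratic_energy S \<tau>" "u \<in> S" "w \<in> S"
  shows "(\<lambda>x. s *\<^sub>R u x + t *\<^sub>R w x) \<in> S" "integrable lborel (\<tau> u w)" "0 \<le> \<tau> u u x"
    and "AE x in lborel. \<tau> (\<lambda>x. s *\<^sub>R u x + t *\<^sub>R w x) (\<lambda>x. s *\<^sub>R u x + t *\<^sub>R w x) x
      = s^2 * \<tau> u u x + 2 * s * t * \<tau> u w x + t^2 * \<tau> w w x"
  using assms unfolding quadratic_energy_def by blast+

lemma integral_quadratic_energy_nonneg:
  "quadratic_energy S \<tau> \<Longrightarrow> \<phi> \<in> S \<Longrightarrow> 0 \<le> integral\<^sup>L lborel (\<tau> \<phi> \<phi>)"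
  by (simp add: quadratic_energyD(3) Bochner_Integration.integral_nonneg)

lemma integral_quadratic_energy_add_scaleR:
  assumes Q: "quadratic_energy S \<tau>" and "u \<in> S" "\<phi> \<in> S"
  shows "integral\<^sup>L lborel (\<tau> (\<lambda>x. u x + t *\<^sub>R \<phi> x) (\<lambda>x. u x + t *\<^sub>R \<phi> x))
    = integral\<^sup>L lborel (\<tau> u u) + 2 * t * integral\<^sup>L lborel (\<tau> u \<phi>) + t^2 * integral\<^sup>L lborel (\<tau> \<phi> \<phi>)"
proof -
  let ?v = "\<lambda>x. u x + t *\<^sub>R \<phi> x"
  have "?v \<in> S"
    using quadratic_energyD(1)[OF assms, of 1 t] by simp
  then have "integral\<^sup>L lborel (\<tau> ?v ?v)
      = integral\<^sup>L lborel (\<lambda>x. \<tau> u u x + 2 * t * \<tau> u \<phi> x + t^2 * \<tau> \<phi> \<phi> x)"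
    using quadratic_energyD(4)[OF assms, of 1 t] quadratic_energyD(2)[OF Q] assms
    by (intro integral_cong_AE) auto
  then show ?thesis
    using quadratic_energyD(2)[OF Q] assms by simp
qed

lemma set_integral_quadratic_energy_scaleR_le:
  assumes Q: "quadratic_energy S \<tau>" and \<phi>: "\<phi> \<in> S" and "A \<in> sets borel"
  shows "(LINT x:A|lborel. \<tau> (\<lambda>x. t *\<^sub>R \<phi> x) (\<lambda>x. t *\<^sub>R \<phi> x) x) \<le> t^2 * integral\<^sup>L lborel (\<tau> \<phi> \<phi>)"
proof -
  have "(\<lambda>x. t *\<^sub>R \<phi> x) \<in> S"
    using quadratic_energyD(1)[OF Q \<phi> \<phi>, of 0 t] by simp
  then have "(LINT x:A|lborel. \<tau> (\<lambda>x. t *\<^sub>R \<phi> x) (\<lambda>x. t *\<^sub>R \<phi> x) x) = (LINT x:A|lborel. t^2 * \<tau> \<phi> \<phi> x)"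
    using quadratic_energyD(4)[OF Q \<phi> \<phi>, of 0 t] quadratic_energyD(2)[OF Q] \<phi> \<open>A \<in> sets borel\<close>
    by (intro set_lebesgue_integral_cong_AE) (auto elim: AE_mp)
  also have "\<dots> = t^2 * (LINT x:A|lborel. \<tau> \<phi> \<phi> x)"
    by simp
  also have "\<dots> \<le> t^2 * integral\<^sup>L lborel (\<tau> \<phi> \<phi>)"
    using quadratic_energyD(2,3)[OF Q \<phi> \<phi>] \<open>A \<in> sets borel\<close>
    by (intro mult_left_mono set_integral_le_integral) auto
  finally show ?thesis .
qed

lemma local_quasimin_first_variation_bound:
  fixes \<tau> :: "('a::euclidean_space \<Rightarrow> 'b::real_normed_vector) \<Rightarrow> ('a \<Rightarrow> 'b) \<Rightarrow> 'a \<Rightarrow> real"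
  assumes energy: "quadratic_energy S \<tau>" "V \<subseteq> S"
    and LQ: "local_quasimin V VB \<tau> f C c R u" and f: "f \<in> dual_sp V nrm"
    and "C > 0" "c > 0" "R > 0" "0 < r" "r \<le> R"
    and \<phi>: "\<phi> \<in> V" and shift: "\<And>t. (\<lambda>x. u x + t *\<^sub>R \<phi> x) \<in> V"
    and local: "\<And>t. (\<lambda>x. t *\<^sub>R \<phi> x) \<in> VB a r"
  shows "\<bar>integral\<^sup>L lborel (\<tau> u \<phi>) - f \<phi>\<bar>
    \<le> quasimin_const C c R DIM('a) * r powr (real DIM('a) / 2) * sqrt (integral\<^sup>L lborel (\<tau> \<phi> \<phi>))"
proof (rule abs_le_of_quadratic_lower_bound)
  have u: "u \<in> V"
    using LQ by (simp add: local_quasimin_def)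
  with \<phi> energy(2) have uS: "u \<in> S" and \<phi>S: "\<phi> \<in> S"
    by auto
  show "0 \<le> integral\<^sup>L lborel (\<tau> \<phi> \<phi>)"
    using energy(1) \<phi>S by (rule integral_quadratic_energy_nonneg)
  fix t :: real
  assume small: "t^2 * integral\<^sup>L lborel (\<tau> \<phi> \<phi>) \<le> c"
  let ?v = "\<lambda>x. u x + t *\<^sub>R \<phi> x"
  have "f (\<lambda>x. 1 *\<^sub>R u x + t *\<^sub>R \<phi> x) = 1 * f u + t * f \<phi>"
    using f u \<phi> unfolding dual_sp_def by blast
  then have J_v: "J_f \<tau> f ?v = J_f \<tau> f u + 2 * t * (integral\<^sup>L lborel (\<tau> u \<phi>) - f \<phi>)
      + t^2 * integral\<^sup>L lborel (\<tau> \<phi> \<phi>)"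
    unfolding J_f_def integral_quadratic_energy_add_scaleR[OF energy(1) uS \<phi>S]
    by (simp add: algebra_simps)
  have "(LINT x:ball a r|lborel. \<tau> (\<lambda>x. ?v x - u x) (\<lambda>x. ?v x - u x) x) \<le> c"
    using set_integral_quadratic_energy_scaleR_le[OF energy(1) \<phi>S, of "ball a r" t] small by simp
  then have "J_f \<tau> f ?v \<ge> J_f \<tau> f u - C * r ^ DIM('a)"
    using LQ[unfolded local_quasimin_def, THEN conjunct2, rule_format, of r ?v a]
      shift local \<open>0 < r\<close> \<open>r \<le> R\<close> by simp
  with J_v show "- (C * r ^ DIM('a)) \<le> 2 * t * (integral\<^sup>L lborel (\<tau> u \<phi>) - f \<phi>)
      + t^2 * integral\<^sup>L lborel (\<tau> \<phi> \<phi>)"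
    by simp
qed (use assms in auto)

section \<open>The three problems\<close>

lemma inner_add_scaleR_self:
  fixes a b :: "'v::real_inner"
  shows "(s *\<^sub>R a + t *\<^sub>R b) \<bullet> (s *\<^sub>R a + t *\<^sub>R b) = s^2 * (a \<bullet> a) + 2 * s * t * (a \<bullet> b) + t^2 * (b \<bullet> b)"
  by (simp add: inner_add_left inner_add_right inner_commute[of b a] power2_eq_square algebra_simps)

lemma sum_inner_add_scaleR_self:
  fixes a b :: "'i \<Rightarrow> 'v::real_inner"
  shows "(\<Sum>i\<in>S. (s *\<^sub>R a i + t *\<^sub>R b i) \<bullet> (s *\<^sub>R a i + t *\<^sub>R b i))
    = s^2 * (\<Sum>i\<in>S. a i \<bullet> a i) + 2 * s * t * (\<Sum>i\<in>S. a i \<bullet> b i) + t^2 * (\<Sum>i\<in>S. b i \<bullet> b i)"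
  by (simp add: inner_add_scaleR_self sum.distrib sum_distrib_left)

lemma tau_I_add_scaleR_AE:
  assumes u: "sobolev m u" and w: "sobolev m w"
  shows "AE x in lborel. tau_I m (\<lambda>x. s *\<^sub>R u x + t *\<^sub>R w x) (\<lambda>x. s *\<^sub>R u x + t *\<^sub>R w x) x
    = s^2 * tau_I m u u x + 2 * s * t * tau_I m u w x + t^2 * tau_I m w w x"
proof -
  let ?I = "{is. set is \<subseteq> (Basis::'a set) \<and> length is = m}"
  have "finite ?I"
    by (rule finite_lists_length_eq) simp
  then have "AE x in lborel. \<forall>is\<in>?I. wD is (\<lambda>x. s *\<^sub>R u x + t *\<^sub>R w x) x = s *\<^sub>R wD is u x + t *\<^sub>R wD is w x"
    using u w by (intro AE_finite_allI wD_lin_AE) auto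
  then show ?thesis
  proof eventually_elim
    case (elim x)
    have "tau_I m (\<lambda>x. s *\<^sub>R u x + t *\<^sub>R w x) (\<lambda>x. s *\<^sub>R u x + t *\<^sub>R w x) x
        = (\<Sum>is\<in>?I. (s *\<^sub>R wD is u x + t *\<^sub>R wD is w x) \<bullet> (s *\<^sub>R wD is u x + t *\<^sub>R wD is w x))"
      unfolding tau_I_def using elim by (intro sum.cong) auto
    then show ?case
      unfolding sum_inner_add_scaleR_self by (simp add: tau_I_def)
  qed
qed

lemma quadratic_energy_tau_I: "quadratic_energy {u. sobolev m u} (tau_I m)"
proof (rule quadratic_energyI)
  fix u w :: "'a \<Rightarrow> real" and s t :: real
  assume "u \<in> {u. sobolev m u}" "w \<in> {u. sobolev m u}"
  then have u: "sobolev m u" and w: "sobolev m w"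
    by simp_all
  show "(\<lambda>x. s *\<^sub>R u x + t *\<^sub>R w x) \<in> {u. sobolev m u}"
    using sobolev_lin[OF u w] by simp
  show "integrable lborel (tau_I m u w)"
    unfolding tau_I_def using sobolev_wD[OF u] sobolev_wD[OF w]
    by (intro Bochner_Integration.integrable_sum) (use integrable_inner_L2[of "wD _ u" "wD _ w"] in auto)
  show "AE x in lborel. tau_I m (\<lambda>x. s *\<^sub>R u x + t *\<^sub>R w x) (\<lambda>x. s *\<^sub>R u x + t *\<^sub>R w x) x
      = s^2 * tau_I m u u x + 2 * s * t * tau_I m u w x + t^2 * tau_I m w w x"
    using u w by (rule tau_I_add_scaleR_AE)
next
  show "0 \<le> tau_I m u u x" for u x
    by (simp add: tau_I_def sum_nonneg)
qed

lemma tau_II_add_scaleR_AE: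
  fixes u w :: "'a::euclidean_space \<Rightarrow> 'a"
  assumes u: "sobolev 1 u" and w: "sobolev 1 w"
  shows "AE x in lborel. tau_II c0 (\<lambda>x. s *\<^sub>R u x + t *\<^sub>R w x) (\<lambda>x. s *\<^sub>R u x + t *\<^sub>R w x) x
    = s^2 * tau_II c0 u u x + 2 * s * t * tau_II c0 u w x + t^2 * tau_II c0 w w x"
proof -
  let ?v = "\<lambda>x. s *\<^sub>R u x + t *\<^sub>R w x"
  have "AE x in lborel. \<forall>j\<in>Basis. wD [j] ?v x = s *\<^sub>R wD [j] u x + t *\<^sub>R wD [j] w x"
    using u w by (intro AE_finite_allI wD_lin_AE) auto
  moreover have "AE x in lborel. wdiv ?v x = s * wdiv u x + t * wdiv w x"
    using u w by (rule wdiv_lin_AE)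
  ultimately show ?thesis
  proof eventually_elim
    case (elim x)
    have "(\<Sum>j\<in>Basis. wD [j] ?v x \<bullet> wD [j] ?v x)
        = (\<Sum>j\<in>Basis. (s *\<^sub>R wD [j] u x + t *\<^sub>R wD [j] w x) \<bullet> (s *\<^sub>R wD [j] u x + t *\<^sub>R wD [j] w x))"
      using elim by (intro sum.cong) auto
    moreover have "c0 * wdiv ?v x * wdiv ?v x = s^2 * (c0 * wdiv u x * wdiv u x)
        + 2 * s * t * (c0 * wdiv u x * wdiv w x) + t^2 * (c0 * wdiv w x * wdiv w x)"
      using elim by (simp add: power2_eq_square algebra_simps)
    ultimately show ?case
      unfolding tau_II_def sum_inner_add_scaleR_self by (simp add: algebra_simps)
  qed
qed

lemma quadratic_energy_tau_II:
  assumes "c0 \<ge> 0"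
  shows "quadratic_energy {u. sobolev 1 u} (tau_II c0)"
proof (rule quadratic_energyI)
  fix u w :: "'a \<Rightarrow> 'a" and s t :: real
  assume "u \<in> {u. sobolev 1 u}" "w \<in> {u. sobolev 1 u}"
  then have u: "sobolev 1 u" and w: "sobolev 1 w"
    by simp_all
  show "(\<lambda>x. s *\<^sub>R u x + t *\<^sub>R w x) \<in> {u. sobolev 1 u}"
    using sobolev_lin[OF u w] by simp
  have "integrable lborel (\<lambda>x. \<Sum>j\<in>Basis. wD [j] u x \<bullet> wD [j] w x)"
    using sobolev_wD[OF u, of "[_]"] sobolev_wD[OF w, of "[_]"]
    by (intro Bochner_Integration.integrable_sum integrable_inner_L2) auto
  moreover have "integrable lborel (\<lambda>x. c0 * (wdiv u x * wdiv w x))"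
    using integrable_inner_L2[OF L2_wdiv[OF u] L2_wdiv[OF w]] by simp
  ultimately show "integrable lborel (tau_II c0 u w)"
    unfolding tau_II_def by (simp add: mult.assoc)
  show "AE x in lborel. tau_II c0 (\<lambda>x. s *\<^sub>R u x + t *\<^sub>R w x) (\<lambda>x. s *\<^sub>R u x + t *\<^sub>R w x) x
      = s^2 * tau_II c0 u u x + 2 * s * t * tau_II c0 u w x + t^2 * tau_II c0 w w x"
    using u w by (rule tau_II_add_scaleR_AE)
next
  show "0 \<le> tau_II c0 u u x" for u x
    using assms by (simp add: tau_II_def sum_nonneg mult.assoc)
qed

lemma sobolev_quasimin_bound:
  fixes \<tau> :: "('a::euclidean_space \<Rightarrow> 'b::euclidean_space) \<Rightarrow> ('a \<Rightarrow> 'b) \<Rightarrow> 'a \<Rightarrow> real"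
  assumes "quadratic_energy {u. sobolev m u} \<tau>"
    and "local_quasimin {u. sobolev m u} (\<lambda>a r. H0 m (ball a r)) \<tau> f C c R u"
    and "f \<in> dual_sp {u. sobolev m u} nrm"
    and "C > 0" "c > 0" "R > 0" "0 < r" "r \<le> R" and \<phi>: "\<phi> \<in> H0 m (ball a r)"
  shows "\<bar>integral\<^sup>L lborel (\<tau> u \<phi>) - f \<phi>\<bar>
    \<le> quasimin_const C c R DIM('a) * r powr (real DIM('a) / 2) * sqrt (integral\<^sup>L lborel (\<tau> \<phi> \<phi>))"
proof (rule local_quasimin_first_variation_bound[OF assms(1) order.refl assms(2-8)])
  have u: "sobolev m u" and \<phi>': "sobolev m \<phi>"
    using assms(2) \<phi> by (auto simp: local_quasimin_def H0_def)
  show "\<phi> \<in> {u. sobolev m u}"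
    using \<phi>' by simp
  show "(\<lambda>x. u x + t *\<^sub>R \<phi> x) \<in> {u. sobolev m u}" for t
    using sobolev_lin[OF u \<phi>', of 1 t] by simp
  show "(\<lambda>x. t *\<^sub>R \<phi> x) \<in> H0 m (ball a r)" for t
    using \<phi> by (rule H0_scaleR)
qed

lemma problem_I_bound:
  fixes u \<phi> :: "'a::euclidean_space \<Rightarrow> real"
  assumes "local_quasimin (V_I m) (VB_I m) (tau_I m) f C c R u" "f \<in> dual_sp (V_I m) (sob_norm m)"
    and "C > 0" "c > 0" "R > 0" "0 < r" "r \<le> R" "\<phi> \<in> VB_I m a r"
  shows "\<bar>integral\<^sup>L lborel (tau_I m u \<phi>) - f \<phi>\<bar>
    \<le> quasimin_const C c R DIM('a) * r powr (real DIM('a) / 2) * sqrt (integral\<^sup>L lborel (tau_I m \<phi> \<phi>))"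
  using assms unfolding V_I_def VB_I_def[abs_def]
  by (rule sobolev_quasimin_bound[OF quadratic_energy_tau_I])

lemma problem_II_bound:
  fixes u \<phi> :: "'a::euclidean_space \<Rightarrow> 'a"
  assumes "local_quasimin V_II VB_II (tau_II c0) f C c R u" "f \<in> dual_sp V_II (sob_norm 1)" "c0 \<ge> 0"
    and "C > 0" "c > 0" "R > 0" "0 < r" "r \<le> R" "\<phi> \<in> VB_II a r"
  shows "\<bar>integral\<^sup>L lborel (tau_II c0 u \<phi>) - f \<phi>\<bar>
    \<le> quasimin_const C c R DIM('a) * r powr (real DIM('a) / 2) * sqrt (integral\<^sup>L lborel (tau_II c0 \<phi> \<phi>))"
  using assms(1,2,4-) unfolding V_II_def VB_II_def[abs_def]
  by (rule sobolev_quasimin_bound[OF quadratic_energy_tau_II[OF \<open>c0 \<ge> 0\<close>]])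

lemma problem_III_bound:
  fixes u \<phi> :: "'a::euclidean_space \<Rightarrow> 'a"
  assumes LQ: "local_quasimin V_III VB_III tau_III f C c R u" and "f \<in> dual_sp V_III (sob_norm 1)"
    and "C > 0" "c > 0" "R > 0" "0 < r" "r \<le> R" and \<phi>: "\<phi> \<in> VB_III a r"
  shows "\<bar>integral\<^sup>L lborel (tau_III u \<phi>) - f \<phi>\<bar>
    \<le> quasimin_const C c R DIM('a) * r powr (real DIM('a) / 2) * sqrt (integral\<^sup>L lborel (tau_III \<phi> \<phi>))"
proof (rule local_quasimin_first_variation_bound[OF _ _ LQ assms(2-7)])
  have "tau_III = tau_II 0"
    by (simp add: fun_eq_iff tau_III_def tau_II_def)
  show "quadratic_energy {u. sobolev 1 u} tau_III"
    unfolding \<open>tau_III = tau_II 0\<close> by (rule quadratic_energy_tau_II) simp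
  show "V_III \<subseteq> {u. sobolev 1 u}"
    by (auto simp: V_III_def)
  have u: "sobolev 1 u" "AE x in lborel. wdiv u x = 0"
    using LQ by (auto simp: local_quasimin_def V_III_def)
  have \<phi>': "\<phi> \<in> H0 1 (ball a r)" "sobolev 1 \<phi>" "AE x in lborel. wdiv \<phi> x = 0"
    using \<phi> by (auto simp: VB_III_def H0_def)
  show "\<phi> \<in> V_III"
    using \<phi>' by (simp add: V_III_def)
  show "(\<lambda>x. u x + t *\<^sub>R \<phi> x) \<in> V_III" for t
  proof -
    have "AE x in lborel. wdiv (\<lambda>x. 1 *\<^sub>R u x + t *\<^sub>R \<phi> x) x = 0"
      using wdiv_lin_AE[OF u(1) \<phi>'(2), of 1 t] u(2) \<phi>'(3) by eventually_elim simp
    then show ?thesis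
      using sobolev_lin[OF u(1) \<phi>'(2), of 1 t] by (simp add: V_III_def)
  qed
  show "(\<lambda>x. t *\<^sub>R \<phi> x) \<in> VB_III a r" for t
  proof -
    have "AE x in lborel. wdiv (\<lambda>x. 0 *\<^sub>R \<phi> x + t *\<^sub>R \<phi> x) x = 0"
      using wdiv_lin_AE[OF \<phi>'(2) \<phi>'(2), of 0 t] \<phi>'(3) by eventually_elim simp
    then show ?thesis
      using H0_scaleR[OF \<phi>'(1)] by (simp add: VB_III_def)
  qed
qed

theorem lemma3:
  assumes "DIM('a::euclidean_space) \<ge> 2"
  shows
  "(\<forall>m::nat. m \<ge> 1 \<longrightarrow> (\<forall>C c R::real. C > 0 \<and> c > 0 \<and> R > 0 \<longrightarrow> (\<exists>C'::real.
      \<forall>(f::('a \<Rightarrow> real) \<Rightarrow> real) (u::'a \<Rightarrow> real) (a::'a) (r::real) (\<phi>::'a \<Rightarrow> real).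
        f \<in> dual_sp (V_I m) (sob_norm m) \<and> local_quasimin (V_I m) (VB_I m) (tau_I m) f C c R u
        \<and> 0 < r \<and> r \<le> R \<and> \<phi> \<in> VB_I m a r \<longrightarrow>
        \<bar>integral\<^sup>L lborel (\<lambda>x. tau_I m u \<phi> x) - f \<phi>\<bar>
          \<le> C' * r powr (real DIM('a) / 2) * sqrt (integral\<^sup>L lborel (\<lambda>x. tau_I m \<phi> \<phi> x)))))
 \<and> (\<forall>c0::real. c0 > 0 \<longrightarrow> (\<forall>C c R::real. C > 0 \<and> c > 0 \<and> R > 0 \<longrightarrow> (\<exists>C'::real.
      \<forall>(f::('a \<Rightarrow> 'a) \<Rightarrow> real) (u::'a \<Rightarrow> 'a) (a::'a) (r::real) (\<phi>::'a \<Rightarrow> 'a).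
        f \<in> dual_sp V_II (sob_norm 1) \<and> local_quasimin V_II VB_II (tau_II c0) f C c R u
        \<and> 0 < r \<and> r \<le> R \<and> \<phi> \<in> VB_II a r \<longrightarrow>
        \<bar>integral\<^sup>L lborel (\<lambda>x. tau_II c0 u \<phi> x) - f \<phi>\<bar>
          \<le> C' * r powr (real DIM('a) / 2) * sqrt (integral\<^sup>L lborel (\<lambda>x. tau_II c0 \<phi> \<phi> x)))))
 \<and> (\<forall>C c R::real. C > 0 \<and> c > 0 \<and> R > 0 \<longrightarrow> (\<exists>C'::real.
      \<forall>(f::('a \<Rightarrow> 'a) \<Rightarrow> real) (u::'a \<Rightarrow> 'a) (a::'a) (r::real) (\<phi>::'a \<Rightarrow> 'a).
        f \<in> dual_sp V_III (sob_norm 1) \<and> local_quasimin V_III VB_III tau_III f C c R u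
        \<and> 0 < r \<and> r \<le> R \<and> \<phi> \<in> VB_III a r \<longrightarrow>
        \<bar>integral\<^sup>L lborel (\<lambda>x. tau_III u \<phi> x) - f \<phi>\<bar>
          \<le> C' * r powr (real DIM('a) / 2) * sqrt (integral\<^sup>L lborel (\<lambda>x. tau_III \<phi> \<phi> x))))"
  by (intro conjI allI impI exI; elim conjE)
    (fast intro: problem_I_bound problem_II_bound problem_III_bound less_imp_le)+

end
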